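(* $\operatorname{Sort} \equiv_{\mathrm{sW}} \min^-_{\omega+1}$.
   Context: Represented spaces: a representation of a set $X$ is a partial surjection $\delta_X:\subseteq\mathbb{N}^\mathbb{N}\to X$. For a partial multi-valued function $f:\subseteq X\rightrightarrows Y$ between represented spaces, a realizer is a partial $F:\subseteq\mathbb{N}^\mathbb{N}\to\mathbb{N}^\mathbb{N}$ with $\delta_Y(F(p))\in f(\delta_X(p))$ for all $p$ with $\delta_X(p)\in\mathrm{dom}(f)$. Strong Weihrauch reducibility: $f\le_{\mathrm{sW}} g$ iff there are computable partial $H,K:\subseteq\mathbb{N}^\mathbb{N}\to\mathbb{N}^\mathbb{N}$ such that $H\circ G\circ K$ is a realizer of $f$ for every realizer $G$ of $g$; $\equiv_{\mathrm{sW}}$ denotes reducibility in both directions. $\operatorname{Sort}:2^\mathbb{N}\to 2^\mathbb{N}$ is defined by $\operatorname{Sort}(p)=0^n1^\mathbb{N}$ if $p$ contains exactly $n$ occurrences of $0$, and $\operatorname{Sort}(p)=0^\mathbb{N}$ if $p$ contains infinitely many occurrences of $0$. $\omega+1:=\{-2^{-n}:n\in\mathbb{N}\}\cup\{0\}\subseteq\mathbb{R}$, a computable metric space with the Euclidean metric and dense set $\omega+1$ itself; its points are represented by the Cauchy representation (effective Cauchy sequences from $\omega+1$, i.e. sequences $(a_i)$ with $|a_i-a_j|\le 2^{-i}$ for $j\ge i$). Closed subsets of $\omega+1$ are represented negatively ($\mathcal{A}_-(\omega+1)$): a name of a closed $A$ is an enumeration of basic open balls $B(a,q)$ (with $a\in\omega+1$,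 $q$ a nonnegative rational) whose union is $(\omega+1)\setminus A$. $\min^-_{\omega+1}:\subseteq\mathcal{A}_-(\omega+1)\to\omega+1$ maps each nonempty closed $A$ to $\min A$ (with respect to the usual order of $\mathbb{R}$). *)

theory Defs
  imports Complex_Main "HOL-Library.Nat_Bijection"
begin

inductive recfn :: "nat \<Rightarrow> (nat list \<Rightarrow> nat) \<Rightarrow> bool" where
  zero: "recfn n (\<lambda>_. 0)"
| succ: "recfn 1 (\<lambda>xs. Suc (hd xs))"
| proj: "i < n \<Longrightarrow> recfn n (\<lambda>xs. xs ! i)"
| comp: "recfn m f \<Longrightarrow> length gs = m \<Longrightarrow> (\<forall>g\<in>set gs. recfn n g) \<Longrightarrow>
           recfn n (\<lambda>xs. f (map (\<lambda>g. g xs) gs))"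
| prim: "recfn n f \<Longrightarrow> recfn (Suc (Suc n)) g \<Longrightarrow>
           recfn (Suc n) (\<lambda>xs. rec_nat (f (tl xs)) (\<lambda>k r. g (k # r # tl xs)) (hd xs))"
| mu: "recfn (Suc n) f \<Longrightarrow> (\<forall>xs. length xs = n \<longrightarrow> (\<exists>y. f (y # xs) = 0)) \<Longrightarrow>
           recfn n (\<lambda>xs. LEAST y. f (y # xs) = 0)"

definition total_recursive :: "(nat \<Rightarrow> nat) \<Rightarrow> bool" where
  "total_recursive h \<longleftrightarrow> (\<exists>f. recfn 1 f \<and> (\<forall>x. h x = f [x]))"

type_synonym baire = "nat \<Rightarrow> nat"

definition pref :: "baire \<Rightarrow> nat \<Rightarrow> nat list" where
  "pref p m = map p [0..<m]"

text \<open>A machine given by a total recursive function h on codes of finite words: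
  on input prefix w it has written the word list_decode (h (list_encode w)).
  "computes h p q": on input p the machine produces the infinite output q.
  The partial computable functions of Baire space are exactly the maps
  p \<mapsto> q given by such relations (restricted to the inputs where output is infinite).\<close>
definition machine_out :: "(nat \<Rightarrow> nat) \<Rightarrow> nat list \<Rightarrow> nat list" where
  "machine_out h w = list_decode (h (list_encode w))"

definition computes :: "(nat \<Rightarrow> nat) \<Rightarrow> baire \<Rightarrow> baire \<Rightarrow> bool" where
  "computes h p q \<longleftrightarrow>
     (\<forall>n. \<exists>m. n < length (machine_out h (pref p m))) \<and>
     (\<forall>m i. i < length (machine_out h (pref p m)) \<longrightarrow> machine_out h (pref p m) ! i = q i)"

record ('a, 'b) problem =
  in_rep  :: "baire \<Rightarrow> 'a option"
  out_rep :: "baire \<Rightarrow> 'b option"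
  pdom    :: "'a set"
  pmap    :: "'a \<Rightarrow> 'b set"

definition realizer :: "('a, 'b) problem \<Rightarrow> (baire \<Rightarrow> baire) \<Rightarrow> bool" where
  "realizer P G \<longleftrightarrow>
     (\<forall>p x. in_rep P p = Some x \<longrightarrow> x \<in> pdom P \<longrightarrow>
        (\<exists>y. out_rep P (G p) = Some y \<and> y \<in> pmap P x))"

definition sW_le :: "('a, 'b) problem \<Rightarrow> ('c, 'd) problem \<Rightarrow> bool" where
  "sW_le P Q \<longleftrightarrow>
     (\<exists>hK hH. total_recursive hK \<and> total_recursive hH \<and>
        (\<forall>G. realizer Q G \<longrightarrow>
           (\<forall>p x. in_rep P p = Some x \<longrightarrow> x \<in> pdom P \<longrightarrow>
              (\<exists>q r y. computes hK p q \<and> computes hH (G q) r \<and>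
                        out_rep P r = Some y \<and> y \<in> pmap P x))))"

definition sW_equiv :: "('a, 'b) problem \<Rightarrow> ('c, 'd) problem \<Rightarrow> bool" where
  "sW_equiv P Q \<longleftrightarrow> sW_le P Q \<and> sW_le Q P"

definition cantor_rep :: "baire \<Rightarrow> baire option" where
  "cantor_rep p = (if \<forall>n. p n \<le> 1 then Some p else None)"

definition Sort_fun :: "baire \<Rightarrow> baire" where
  "Sort_fun p = (if finite {i. p i = 0}
                 then (\<lambda>i. if i < card {i. p i = 0} then 0 else 1)
                 else (\<lambda>_. 0))"

definition Sort_problem :: "(baire, baire) problem" where
  "Sort_problem = \<lparr> in_rep = cantor_rep, out_rep = cantor_rep,
                    pdom = {p. \<forall>n. p n \<le> 1}, pmap = (\<lambda>p. {Sort_fun p}) \<rparr>"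

definition omega1 :: "real set" where
  "omega1 = {- ((1/2) ^ n) | n. True} \<union> {0}"

text \<open>Standard numbering of the dense set omega+1 itself.\<close>
definition nu :: "nat \<Rightarrow> real" where
  "nu k = (if k = 0 then 0 else - ((1/2) ^ (k - 1)))"

definition cauchy_rep :: "baire \<Rightarrow> real option" where
  "cauchy_rep p = (if (\<forall>i j. i \<le> j \<longrightarrow> \<bar>nu (p i) - nu (p j)\<bar> \<le> (1/2) ^ i)
                   then Some (lim (\<lambda>i. nu (p i))) else None)"

definition ball_code :: "nat \<Rightarrow> real set" where
  "ball_code n = (case prod_decode n of (k, m) \<Rightarrow> (case prod_decode m of (s, t) \<Rightarrow>
      {y \<in> omega1. \<bar>y - nu k\<bar> < real s / real (Suc t)}))"

definition closed_neg_rep :: "baire \<Rightarrow> real set option" where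
  "closed_neg_rep p = Some (omega1 - (\<Union>i. ball_code (p i)))"

definition min_problem :: "(real set, real) problem" where
  "min_problem = \<lparr> in_rep = closed_neg_rep, out_rep = cauchy_rep,
                   pdom = {A. A \<noteq> {}}, pmap = (\<lambda>A. {LEAST x. x \<in> A}) \<rparr>"

end

theory Submission
  imports Defs
begin

text \<open>Both reductions rest on the shape of \<open>\<omega> + 1\<close>: its points \<open>-2^-n\<close> accumulate only at \<open>0\<close>,
  and a \<open>2^-(i+2)\<close>-approximation of a point of \<open>\<omega> + 1\<close> decides whether it lies below \<open>-2^-i\<close>.

  To reduce Sort to the minimum, let each zero of \<open>p\<close> remove the next point \<open>-2^-n\<close> from the
  left. The minimum of what remains is \<open>-2^-N\<close> with \<open>N\<close> the number of zeros of \<open>p\<close>, or \<open>0\<close> if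
  there are infinitely many, and \<open>Sort p i = 1\<close> exactly when this minimum lies below \<open>-2^-i\<close>.

  To reduce the minimum to Sort, scan the points \<open>-1, -1/2, -1/4, \<dots>\<close> from the left, moving on
  (and emitting a \<open>0\<close>) whenever the current point is seen to be covered by the balls enumerated so
  far. The number of zeros is the index \<open>N\<close> of the least point of the closed set, Sort turns the
  sequence into \<open>0^N 1^\<omega>\<close>, and from its first \<open>i + 1\<close> entries \<open>-2^-min(i+1,N)\<close> approximates the
  minimum within \<open>2^-(i+1)\<close>.

  All maps involved write their \<open>j\<close>-th output after reading a bounded number of inputs beyond
  \<open>j\<close>, and are total recursive by the closure properties of Kleene's recursive functions.\<close>

section \<open>Total recursive functions of several arguments\<close>

definition recursive :: "nat \<Rightarrow> (nat list \<Rightarrow> nat) \<Rightarrow> bool" where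
  "recursive n f \<longleftrightarrow> (\<exists>g. recfn n g \<and> (\<forall>xs. length xs = n \<longrightarrow> f xs = g xs))"

lemma recursive_cong:
  "recursive n f \<Longrightarrow> (\<And>xs. length xs = n \<Longrightarrow> f xs = g xs) \<Longrightarrow> recursive n g"
  unfolding recursive_def by metis

lemma recursive_if_recfn: "recfn n f \<Longrightarrow> recursive n f"
  unfolding recursive_def by blast

lemma total_recursive_if_recursive: "recursive 1 (\<lambda>xs. h (xs ! 0)) \<Longrightarrow> total_recursive h"
  unfolding recursive_def total_recursive_def
  by (metis One_nat_def length_Cons list.size(3) nth_Cons_0)

lemma recursive_comp:
  assumes "recursive m f" "length gs = m" "\<forall>g\<in>set gs. recursive n g"
  shows "recursive n (\<lambda>xs. f (map (\<lambda>g. g xs) gs))"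
proof -
  obtain f' where f': "recfn m f'" "\<forall>xs. length xs = m \<longrightarrow> f xs = f' xs"
    using assms(1) unfolding recursive_def by blast
  obtain \<phi> where \<phi>: "\<forall>g\<in>set gs. recfn n (\<phi> g) \<and> (\<forall>xs. length xs = n \<longrightarrow> g xs = \<phi> g xs)"
    using assms(3) unfolding recursive_def by metis
  have "recfn n (\<lambda>xs. f' (map (\<lambda>g. g xs) (map \<phi> gs)))"
    by (rule recfn.comp[OF f'(1)]) (use assms(2) \<phi> in auto)
  moreover have "f (map (\<lambda>g. g xs) gs) = f' (map (\<lambda>g. g xs) (map \<phi> gs))" if "length xs = n" for xs
  proof -
    have "map (\<lambda>g. g xs) gs = map (\<lambda>g. g xs) (map \<phi> gs)"
      using \<phi> that by auto
    then show ?thesis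
      using f'(2) assms(2) by (metis length_map)
  qed
  ultimately show ?thesis
    unfolding recursive_def by blast
qed

lemma recursive_comp1:
  "recursive 1 (\<lambda>xs. f (xs ! 0)) \<Longrightarrow> recursive n a \<Longrightarrow> recursive n (\<lambda>xs. f (a xs))"
  using recursive_comp[of 1 "\<lambda>xs. f (xs ! 0)" "[a]" n] by simp

lemma recursive_comp2:
  "recursive 2 (\<lambda>xs. f (xs ! 0) (xs ! 1)) \<Longrightarrow> recursive n a \<Longrightarrow> recursive n b \<Longrightarrow>
    recursive n (\<lambda>xs. f (a xs) (b xs))"
  using recursive_comp[of 2 "\<lambda>xs. f (xs ! 0) (xs ! 1)" "[a, b]" n] by simp

lemma recursive_proj: "i < n \<Longrightarrow> recursive n (\<lambda>xs. xs ! i)"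
  by (intro recursive_if_recfn recfn.proj)

lemma recursive_Suc:
  assumes "recursive n a"
  shows "recursive n (\<lambda>xs. Suc (a xs))"
proof -
  have "recursive 1 (\<lambda>xs. Suc (hd xs))"
    by (intro recursive_if_recfn recfn.succ)
  then have "recursive 1 (\<lambda>xs. Suc (xs ! 0))"
    by (rule recursive_cong) (auto simp: length_Suc_conv)
  from recursive_comp1[OF this assms] show ?thesis .
qed

lemma recursive_const: "recursive n (\<lambda>_. c)"
  by (induct c) (auto intro: recursive_if_recfn recfn.zero dest: recursive_Suc)

lemma recursive_tl: "recursive n b \<Longrightarrow> recursive (Suc n) (\<lambda>xs. b (tl xs))"
proof -
  assume b: "recursive n b"
  let ?gs = "map (\<lambda>i xs. xs ! Suc i) [0..<n]"
  have "recursive (Suc n) (\<lambda>xs. b (map (\<lambda>g. g xs) ?gs))"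
    by (rule recursive_comp[OF b]) (auto intro: recursive_proj)
  then show ?thesis
  proof (rule recursive_cong)
    fix xs :: "nat list" assume "length xs = Suc n"
    then obtain y ys where "xs = y # ys" "length ys = n" by (metis length_Suc_conv)
    then show "b (map (\<lambda>g. g xs) ?gs) = b (tl xs)"
      by (simp add: comp_def) (metis map_nth)
  qed
qed

lemma recursive_Cons:
  assumes "recursive (Suc n) f" "recursive n a"
  shows "recursive n (\<lambda>xs. f (a xs # xs))"
proof -
  have "recursive n (\<lambda>xs. f (map (\<lambda>g. g xs) (a # map (\<lambda>i xs. xs ! i) [0..<n])))"
    by (rule recursive_comp[OF assms(1)]) (use assms(2) recursive_proj in auto)
  then show ?thesis
    by (rule recursive_cong) (simp add: comp_def, metis map_nth)
qed

lemma recursive_rec_nat: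
  assumes "recursive n f" "recursive (Suc (Suc n)) g" "recursive n a"
  shows "recursive n (\<lambda>xs. rec_nat (f xs) (\<lambda>k r. g (k # r # xs)) (a xs))"
proof -
  obtain f' where f': "recfn n f'" "\<forall>xs. length xs = n \<longrightarrow> f xs = f' xs"
    using assms(1) unfolding recursive_def by blast
  obtain g' where g': "recfn (Suc (Suc n)) g'" "\<forall>xs. length xs = Suc (Suc n) \<longrightarrow> g xs = g' xs"
    using assms(2) unfolding recursive_def by blast
  have "recfn (Suc n) (\<lambda>xs. rec_nat (f' (tl xs)) (\<lambda>k r. g' (k # r # tl xs)) (hd xs))"
    by (rule recfn.prim[OF f'(1) g'(1)])
  then have "recursive (Suc n) (\<lambda>xs. rec_nat (f (tl xs)) (\<lambda>k r. g (k # r # tl xs)) (hd xs))"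
    by (rule recursive_if_recfn[THEN recursive_cong]) (use f'(2) g'(2) in simp)
  from recursive_Cons[OF this assms(3)] show ?thesis
    by simp
qed

lemma recursive_Least:
  assumes "recursive (Suc n) (\<lambda>ys. F (ys ! 0) (tl ys))" "\<And>xs. length xs = n \<Longrightarrow> \<exists>y. F y xs = 0"
  shows "recursive n (\<lambda>xs. LEAST y. F y xs = 0)"
proof -
  obtain f' where f': "recfn (Suc n) f'" "\<forall>xs. length xs = Suc n \<longrightarrow> F (xs ! 0) (tl xs) = f' xs"
    using assms(1) unfolding recursive_def by blast
  have "\<forall>xs. length xs = n \<longrightarrow> (\<exists>y. f' (y # xs) = 0)"
    using assms(2) f'(2) by (metis length_Cons list.sel(3) nth_Cons_0)
  from recfn.mu[OF f'(1) this] show ?thesis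
    by (rule recursive_if_recfn[THEN recursive_cong])
      (use f'(2) in \<open>metis length_Cons list.sel(3) nth_Cons_0\<close>)
qed

named_theorems recursive_intros

declare recursive_proj [recursive_intros] recursive_const [recursive_intros]
  recursive_Suc [recursive_intros] recursive_tl [recursive_intros]

lemma recursive_rec_nat_expr [recursive_intros]:
  assumes "recursive n a" "recursive n f"
    and "recursive (Suc (Suc n)) (\<lambda>ys. G (ys ! 0) (ys ! 1) (tl (tl ys)))"
  shows "recursive n (\<lambda>xs. rec_nat (f xs) (\<lambda>k r. G k r xs) (a xs))"
  using recursive_rec_nat[OF assms(2,3,1)] by simp

lemma recursive_add [recursive_intros]:
  "recursive n a \<Longrightarrow> recursive n b \<Longrightarrow> recursive n (\<lambda>xs. a xs + b xs)"
proof -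
  have "rec_nat b (\<lambda>k r. Suc r) a = a + b" for a b :: nat
    by (induct a) auto
  moreover assume "recursive n a" "recursive n b"
  then have "recursive n (\<lambda>xs. rec_nat (b xs) (\<lambda>k r. Suc r) (a xs))"
    by (intro recursive_intros) simp_all
  ultimately show ?thesis
    by simp
qed

lemma recursive_diff [recursive_intros]:
  "recursive n a \<Longrightarrow> recursive n b \<Longrightarrow> recursive n (\<lambda>xs. a xs - b xs)"
proof -
  have pred: "rec_nat 0 (\<lambda>k r. k) a = a - 1" for a :: nat
    by (cases a) auto
  have "rec_nat a (\<lambda>k r. r - 1) b = a - b" for a b :: nat
    by (induct b) auto
  moreover assume "recursive n a" "recursive n b"
  then have "recursive n (\<lambda>xs. rec_nat (a xs) (\<lambda>k r. rec_nat 0 (\<lambda>k' r'. k') r) (b xs))"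
    by (intro recursive_intros) simp_all
  ultimately show ?thesis
    by (simp add: pred)
qed

lemma recursive_mult [recursive_intros]:
  "recursive n a \<Longrightarrow> recursive n b \<Longrightarrow> recursive n (\<lambda>xs. a xs * b xs)"
proof -
  have "rec_nat 0 (\<lambda>k r. r + b) a = a * b" for a b :: nat
    by (induct a) auto
  moreover assume "recursive n a" "recursive n b"
  then have "recursive n (\<lambda>xs. rec_nat 0 (\<lambda>k r. r + b xs) (a xs))"
    by (intro recursive_intros) simp_all
  ultimately show ?thesis
    by simp
qed

lemma recursive_if_le [recursive_intros]:
  "recursive n a \<Longrightarrow> recursive n b \<Longrightarrow> recursive n c \<Longrightarrow> recursive n d \<Longrightarrow>
    recursive n (\<lambda>xs. if a xs \<le> b xs then c xs else d xs)"
proof -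
  have "rec_nat c (\<lambda>k r. d) (a - b) = (if a \<le> b then c else d)" for a b c d :: nat
    by (cases "a - b") auto
  moreover assume "recursive n a" "recursive n b" "recursive n c" "recursive n d"
  then have "recursive n (\<lambda>xs. rec_nat (c xs) (\<lambda>k r. d xs) (a xs - b xs))"
    by (intro recursive_intros)
  ultimately show ?thesis
    by simp
qed

lemma recursive_if_less [recursive_intros]:
  "recursive n a \<Longrightarrow> recursive n b \<Longrightarrow> recursive n c \<Longrightarrow> recursive n d \<Longrightarrow>
    recursive n (\<lambda>xs. if a xs < b xs then c xs else d xs)"
proof -
  assume "recursive n a" "recursive n b" "recursive n c" "recursive n d"
  then have "recursive n (\<lambda>xs. if b xs \<le> a xs then d xs else c xs)"
    by (intro recursive_intros)
  then show ?thesis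
    by (rule recursive_cong) auto
qed

lemma recursive_if_eq [recursive_intros]:
  "recursive n a \<Longrightarrow> recursive n b \<Longrightarrow> recursive n c \<Longrightarrow> recursive n d \<Longrightarrow>
    recursive n (\<lambda>xs. if a xs = b xs then c xs else d xs)"
proof -
  assume "recursive n a" "recursive n b" "recursive n c" "recursive n d"
  then have "recursive n (\<lambda>xs. if a xs \<le> b xs then if b xs \<le> a xs then c xs else d xs else d xs)"
    by (intro recursive_intros)
  then show ?thesis
    by (rule recursive_cong) auto
qed

lemma recursive_if_conj [recursive_intros]:
  "recursive n (\<lambda>xs. if P xs then if Q xs then c xs else d xs else d xs) \<Longrightarrow>
    recursive n (\<lambda>xs. if P xs \<and> Q xs then c xs else d xs)"
  by (erule recursive_cong) auto

lemma recursive_sum [recursive_intros]: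
  assumes "recursive (Suc n) (\<lambda>ys. E (ys ! 0) (tl ys))" "recursive n b"
  shows "recursive n (\<lambda>xs. \<Sum>t<b xs. (E t xs :: nat))"
proof -
  let ?gs = "(\<lambda>ys. ys ! 0) # map (\<lambda>i ys. ys ! Suc (Suc i)) [0..<n]"
  have "recursive (Suc (Suc n)) (\<lambda>zs. (\<lambda>ys. E (ys ! 0) (tl ys)) (map (\<lambda>g. g zs) ?gs))"
    by (rule recursive_comp[OF assms(1)]) (auto intro: recursive_proj)
  then have "recursive (Suc (Suc n)) (\<lambda>ys. E (ys ! 0) (tl (tl ys)))"
  proof (rule recursive_cong)
    fix xs :: "nat list" assume "length xs = Suc (Suc n)"
    then obtain y z ys where "xs = y # z # ys" "length ys = n" by (metis length_Suc_conv)
    then show "(\<lambda>ys. E (ys ! 0) (tl ys)) (map (\<lambda>g. g xs) ?gs) = E (xs ! 0) (tl (tl xs))"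
      by (simp add: comp_def) (metis map_nth)
  qed
  moreover have "(\<Sum>t<b. f t) = rec_nat 0 (\<lambda>k r. r + f k) b" for b and f :: "nat \<Rightarrow> nat"
    by (induct b) auto
  ultimately show ?thesis
    using assms(2) by (simp, intro recursive_intros) simp_all
qed

lemma recursive_triangle [recursive_intros]: "recursive n a \<Longrightarrow> recursive n (\<lambda>xs. triangle (a xs))"
proof -
  have "rec_nat 0 (\<lambda>k r. Suc (r + k)) a = triangle a" for a
    by (induct a) auto
  moreover assume "recursive n a"
  then have "recursive n (\<lambda>xs. rec_nat 0 (\<lambda>k r. Suc (r + k)) (a xs))"
    by (intro recursive_intros) simp_all
  ultimately show ?thesis
    by simp
qed

lemma recursive_power2 [recursive_intros]: "recursive n a \<Longrightarrow> recursive n (\<lambda>xs. 2 ^ a xs)"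
proof -
  have "rec_nat 1 (\<lambda>k r. r + r) a = (2::nat) ^ a" for a
    by (induct a) auto
  moreover assume "recursive n a"
  then have "recursive n (\<lambda>xs. rec_nat 1 (\<lambda>k r. r + r) (a xs))"
    by (intro recursive_intros) simp_all
  ultimately show ?thesis
    by simp
qed

lemma recursive_prod_encode [recursive_intros]:
  "recursive n a \<Longrightarrow> recursive n b \<Longrightarrow> recursive n (\<lambda>xs. prod_encode (a xs, b xs))"
proof -
  assume "recursive n a" "recursive n b"
  then have "recursive n (\<lambda>xs. triangle (a xs + b xs) + a xs)"
    by (intro recursive_intros)
  then show ?thesis
    by (simp add: prod_encode_def)
qed

section \<open>Arithmetic on codes of lists\<close>

lemma prod_decode_via_triangle:
  fixes m :: nat
  defines "s \<equiv> LEAST s. m < triangle (Suc s)"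
  shows "prod_decode m = (m - triangle s, s - (m - triangle s))"
proof -
  have ex: "m < triangle (Suc m)"
    by (induct m) auto
  have upper: "m < triangle (Suc s)"
    unfolding s_def by (rule LeastI[of "\<lambda>s. m < triangle (Suc s)", OF ex])
  have lower: "triangle s \<le> m"
  proof (cases s)
    case (Suc s')
    then have "\<not> m < triangle (Suc s')"
      using not_less_Least[of s' "\<lambda>s. m < triangle (Suc s)"] s_def by simp
    then show ?thesis
      using Suc by simp
  qed simp
  have "prod_encode (m - triangle s, s - (m - triangle s)) = m"
    using upper lower by (simp add: prod_encode_def)
  then show ?thesis
    by (metis prod_encode_inverse)
qed

lemma recursive_triangle_root:
  "recursive n a \<Longrightarrow> recursive n (\<lambda>xs. LEAST s. a xs < triangle (Suc s))"
proof -
  assume a: "recursive n a"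
  have "recursive n (\<lambda>xs. LEAST s. Suc (a xs) - triangle (Suc s) = 0)"
  proof (rule recursive_Least)
    show "recursive (Suc n) (\<lambda>ys. Suc (a (tl ys)) - triangle (Suc (ys ! 0)))"
      by (intro recursive_intros a) simp
    show "\<exists>s. Suc (a xs) - triangle (Suc s) = 0" for xs
    proof
      show "Suc (a xs) - triangle (Suc (a xs)) = 0"
        by (induct "a xs") auto
    qed
  qed
  then show ?thesis
    by (rule recursive_cong) (simp only: diff_is_0_eq Suc_le_eq)
qed

lemma recursive_prod_decode [recursive_intros]:
  assumes "recursive n a"
  shows "recursive n (\<lambda>xs. fst (prod_decode (a xs)))" "recursive n (\<lambda>xs. snd (prod_decode (a xs)))"
  unfolding prod_decode_via_triangle fst_conv snd_conv
  by (intro recursive_intros recursive_triangle_root assms)+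

lemma prod_decode_0: "prod_decode 0 = (0, 0)"
  using prod_encode_inverse[of "(0, 0)"] by (simp add: prod_encode_def)

definition code_hd :: "nat \<Rightarrow> nat" where
  "code_hd c = fst (prod_decode (c - 1))"

definition code_tl :: "nat \<Rightarrow> nat" where
  "code_tl c = snd (prod_decode (c - 1))"

definition code_nth :: "nat \<Rightarrow> nat \<Rightarrow> nat" where
  "code_nth c j = code_hd ((code_tl ^^ j) c)"

text \<open>A list is no longer than its code, so counting the nonempty suffixes among the first \<open>c\<close>
  ones yields the length.\<close>
definition code_length :: "nat \<Rightarrow> nat" where
  "code_length c = (\<Sum>j<c. if (code_tl ^^ j) c = 0 then 0 else 1)"

lemma code_tl_list_encode: "code_tl (list_encode w) = list_encode (tl w)"
  by (cases w) (simp_all add: code_tl_def prod_decode_0)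

lemma funpow_code_tl_list_encode: "(code_tl ^^ j) (list_encode w) = list_encode (drop j w)"
  by (induct j) (auto simp: code_tl_list_encode drop_Suc tl_drop)

lemma code_nth_list_encode: "j < length w \<Longrightarrow> code_nth (list_encode w) j = w ! j"
  by (cases "drop j w")
    (auto simp: code_nth_def code_hd_def funpow_code_tl_list_encode nth_via_drop)

lemma length_le_list_encode: "length w \<le> list_encode w"
proof (induct w)
  case (Cons x xs)
  then show ?case
    using le_prod_encode_2[of "list_encode xs" x] by simp
qed simp

lemma code_length_list_encode: "code_length (list_encode w) = length w"
proof -
  have "list_encode v = 0 \<longleftrightarrow> v = []" for v
    by (cases v) simp_all
  then have "code_length (list_encode w) = (\<Sum>j<list_encode w. if j < length w then 1 else 0)"
    unfolding code_length_def funpow_code_tl_list_encode by (intro sum.cong) auto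
  also have "\<dots> = card {j. j < list_encode w \<and> j < length w}"
    by (simp add: sum.If_cases Int_def)
  also have "{j. j < list_encode w \<and> j < length w} = {..<length w}"
    using length_le_list_encode[of w] by auto
  finally show ?thesis
    by simp
qed

lemma funpow_rec_nat: "(f ^^ j) c = rec_nat c (\<lambda>k r. f r) j"
  by (induct j) auto

lemma recursive_code_hd [recursive_intros]: "recursive n a \<Longrightarrow> recursive n (\<lambda>xs. code_hd (a xs))"
  unfolding code_hd_def by (intro recursive_intros)

lemma recursive_code_tl [recursive_intros]: "recursive n a \<Longrightarrow> recursive n (\<lambda>xs. code_tl (a xs))"
  unfolding code_tl_def by (intro recursive_intros)

lemma recursive_funpow_code_tl [recursive_intros]:
  "recursive n a \<Longrightarrow> recursive n b \<Longrightarrow> recursive n (\<lambda>xs. (code_tl ^^ a xs) (b xs))"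
  unfolding funpow_rec_nat by (intro recursive_intros) simp_all

lemma recursive_code_nth [recursive_intros]:
  "recursive n a \<Longrightarrow> recursive n b \<Longrightarrow> recursive n (\<lambda>xs. code_nth (a xs) (b xs))"
  unfolding code_nth_def by (intro recursive_intros)

lemma recursive_code_length [recursive_intros]:
  "recursive n a \<Longrightarrow> recursive n (\<lambda>xs. code_length (a xs))"
  unfolding code_length_def by (intro recursive_intros; simp)

section \<open>Machines computing stream transformers\<close>

definition prefix_machine :: "(nat \<Rightarrow> nat) \<Rightarrow> (nat \<Rightarrow> nat \<Rightarrow> nat) \<Rightarrow> nat \<Rightarrow> nat" where
  "prefix_machine L g c = list_encode (map (g c) [0..<L c])"

lemma prefix_machine_rec_nat:
  "prefix_machine L g c = rec_nat 0 (\<lambda>k r. Suc (prod_encode (g c (L c - Suc k), r))) (L c)"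
proof -
  have "k \<le> L c \<Longrightarrow> rec_nat 0 (\<lambda>k r. Suc (prod_encode (g c (L c - Suc k), r))) k
      = list_encode (map (g c) [L c - k..<L c])" for k
  proof (induct k)
    case (Suc k)
    then have "[L c - Suc k..<L c] = (L c - Suc k) # [L c - k..<L c]"
      by (simp add: upt_conv_Cons Suc_diff_Suc)
    then show ?case
      using Suc by simp
  qed simp
  then show ?thesis
    by (simp add: prefix_machine_def)
qed

lemma total_recursive_prefix_machine:
  assumes "recursive 1 (\<lambda>xs. L (xs ! 0))" "recursive 2 (\<lambda>xs. g (xs ! 0) (xs ! 1))"
  shows "total_recursive (prefix_machine L g)"
proof (rule total_recursive_if_recursive)
  have L: "recursive n a \<Longrightarrow> recursive n (\<lambda>xs. L (a xs))" for n a
    by (rule recursive_comp1[OF assms(1)])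
  have g: "recursive n a \<Longrightarrow> recursive n b \<Longrightarrow> recursive n (\<lambda>xs. g (a xs) (b xs))" for n a b
    by (rule recursive_comp2[OF assms(2)])
  show "recursive 1 (\<lambda>xs. prefix_machine L g (xs ! 0))"
    unfolding prefix_machine_rec_nat by (intro recursive_intros L g; simp)
qed

definition depends_on_prefix :: "nat \<Rightarrow> (baire \<Rightarrow> nat \<Rightarrow> nat) \<Rightarrow> bool" where
  "depends_on_prefix d F \<longleftrightarrow> (\<forall>p p' j. (\<forall>i<j + d. p i = p' i) \<longrightarrow> F p j = F p' j)"

text \<open>Having read \<open>m\<close> inputs, the machine writes the first \<open>m - d\<close> outputs of \<open>F\<close>, which are
  already determined when \<open>F\<close> has lookahead \<open>d\<close>.\<close>
definition stream_machine :: "nat \<Rightarrow> (baire \<Rightarrow> nat \<Rightarrow> nat) \<Rightarrow> nat \<Rightarrow> nat" where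
  "stream_machine d F = prefix_machine (\<lambda>c. code_length c - d) (\<lambda>c. F (code_nth c))"

lemma total_recursive_stream_machine:
  "recursive 2 (\<lambda>xs. F (code_nth (xs ! 0)) (xs ! 1)) \<Longrightarrow> total_recursive (stream_machine d F)"
  unfolding stream_machine_def
  by (rule total_recursive_prefix_machine) (intro recursive_intros; simp)+

lemma computes_stream_machine:
  assumes "depends_on_prefix d F"
  shows "computes (stream_machine d F) p (F p)"
proof -
  have out: "machine_out (stream_machine d F) (pref p m) = map (F p) [0..<m - d]" for m
  proof -
    have "F (code_nth (list_encode (pref p m))) j = F p j" if "j < m - d" for j
      using assms that unfolding depends_on_prefix_def
      by (auto simp: code_nth_list_encode pref_def)
    then show ?thesis
      by (simp add: machine_out_def stream_machine_def prefix_machine_def code_length_list_encode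
          pref_def)
  qed
  show ?thesis
    unfolding computes_def out by (auto intro: exI[of _ "Suc (n + d)" for n])
qed

lemma sW_leI:
  assumes "recursive 2 (\<lambda>xs. K (code_nth (xs ! 0)) (xs ! 1))" "depends_on_prefix d K"
    and "recursive 2 (\<lambda>xs. H (code_nth (xs ! 0)) (xs ! 1))" "depends_on_prefix e H"
    and "\<And>p x. in_rep P p = Some x \<Longrightarrow> x \<in> pdom P \<Longrightarrow>
      \<exists>x'. in_rep Q (K p) = Some x' \<and> x' \<in> pdom Q \<and>
        (\<forall>q y'. out_rep Q q = Some y' \<longrightarrow> y' \<in> pmap Q x' \<longrightarrow>
          (\<exists>y. out_rep P (H q) = Some y \<and> y \<in> pmap P x))"
  shows "sW_le P Q"
  unfolding sW_le_def
proof (rule exI[of _ "stream_machine d K"], rule exI[of _ "stream_machine e H"],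
    intro conjI allI impI)
  show "total_recursive (stream_machine d K)" "total_recursive (stream_machine e H)"
    using assms(1,3) by (simp_all add: total_recursive_stream_machine)
  fix G p x
  assume "realizer Q G" "in_rep P p = Some x" "x \<in> pdom P"
  then obtain y where "out_rep P (H (G (K p))) = Some y" "y \<in> pmap P x"
    using assms(5) unfolding realizer_def by metis
  then show "\<exists>q r y. computes (stream_machine d K) p q \<and> computes (stream_machine e H) (G q) r \<and>
      out_rep P r = Some y \<and> y \<in> pmap P x"
    using computes_stream_machine[OF assms(2)] computes_stream_machine[OF assms(4)] by blast
qed

section \<open>The space \<open>\<omega> + 1\<close>\<close>

lemma nu_0 [simp]: "nu 0 = 0"
  and nu_Suc [simp]: "nu (Suc e) = - ((1/2) ^ e)"
  by (simp_all add: nu_def)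

lemma mem_omega1_iff: "y \<in> omega1 \<longleftrightarrow> y = 0 \<or> (\<exists>n. y = - ((1/2) ^ n))"
  unfolding omega1_def by auto

lemma nu_mem_omega1: "nu k \<in> omega1"
  by (cases k) (auto simp: mem_omega1_iff)

lemma half_power_pos [simp]: "0 < (1/2::real) ^ n"
  by (rule zero_less_power) simp

lemma half_power_not_le_0 [simp]: "\<not> (1/2::real) ^ n \<le> 0"
  using half_power_pos[of n] by linarith

lemma half_power_le_iff [simp]: "(1/2::real) ^ m \<le> (1/2) ^ n \<longleftrightarrow> n \<le> m"
  by (rule power_decreasing_iff) auto

lemma half_power_less_iff [simp]: "(1/2::real) ^ m < (1/2) ^ n \<longleftrightarrow> n < m"
  by (rule power_strict_decreasing_iff) auto

lemma half_power_eq_iff [simp]: "(1/2::real) ^ m = (1/2) ^ n \<longleftrightarrow> m = n"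
  by (metis half_power_le_iff order.antisym order_refl)

lemma omega1_le_point_iff:
  "y \<in> omega1 \<Longrightarrow> y \<le> - ((1/2) ^ i) \<longleftrightarrow> (\<exists>n\<le>i. y = - ((1/2) ^ n))"
  by (auto simp: mem_omega1_iff)

lemma nu_le_point_iff: "nu k \<le> - ((1/2) ^ i) \<longleftrightarrow> 1 \<le> k \<and> k \<le> Suc i"
  by (cases k) auto

lemma omega1_gap: "y \<in> omega1 \<Longrightarrow> y \<le> - ((1/2) ^ i) \<or> - ((1/2) ^ Suc i) \<le> y"
  by (auto simp: mem_omega1_iff not_le simp del: power_Suc)

lemma omega1_same_side:
  assumes "x \<in> omega1" "y \<in> omega1" "\<bar>x - y\<bar> < (1/2) ^ Suc i"
  shows "x \<le> - ((1/2) ^ i) \<longleftrightarrow> y \<le> - ((1/2) ^ i)"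
  using omega1_gap[OF assms(1), of i] omega1_gap[OF assms(2), of i] assms(3)[unfolded abs_less_iff]
    half_power_pos[of i]
  by auto

lemma omega1_isolated:
  assumes "y \<in> omega1" "\<bar>y + (1/2) ^ c\<bar> < (1/2) ^ Suc c"
  shows "y = - ((1/2) ^ c)"
proof -
  have "y \<le> - ((1/2) ^ c)"
    using omega1_gap[OF assms(1), of c] assms(2)[unfolded abs_less_iff] half_power_pos[of c] by auto
  then obtain n where "n \<le> c" "y = - ((1/2) ^ n)"
    using omega1_le_point_iff[OF assms(1)] by blast
  moreover have "n = c" if "n < c"
  proof -
    have "(1/2::real) ^ c \<le> 1/2 * (1/2) ^ n"
      using half_power_le_iff[of c "Suc n"] that by (simp only: power_Suc)
    then show ?thesis
      using assms(2)[unfolded abs_less_iff power_Suc] \<open>y = - ((1/2) ^ n)\<close> by linarith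
  qed
  ultimately show ?thesis
    by fastforce
qed

lemma Least_omega1:
  assumes "A \<subseteq> omega1" "A \<noteq> {}"
  shows "(LEAST x. x \<in> A) =
    (if \<exists>n. - ((1/2) ^ n) \<in> A then - ((1/2) ^ (LEAST n. - ((1/2::real) ^ n) \<in> A)) else 0)"
proof (cases "\<exists>n. - ((1/2::real) ^ n) \<in> A")
  case True
  let ?n = "LEAST n. - ((1/2::real) ^ n) \<in> A"
  have "(LEAST x. x \<in> A) = - ((1/2) ^ ?n)"
  proof (rule Least_equality)
    show "- ((1/2) ^ ?n) \<in> A"
      using True by (rule LeastI_ex)
    show "- ((1/2) ^ ?n) \<le> y" if "y \<in> A" for y
    proof -
      have "y = 0 \<or> (\<exists>n. y = - ((1/2) ^ n))"
        using that assms(1) by (auto simp: mem_omega1_iff)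
      then show ?thesis
        using that by (auto simp: Least_le)
    qed
  qed
  then show ?thesis
    using True by simp
next
  case False
  then have "A \<subseteq> {0}"
    using assms(1) unfolding subset_iff mem_omega1_iff by blast
  then have "A = {0}"
    using assms(2) by blast
  then show ?thesis
    using False by (auto intro: Least_equality)
qed

lemma Least_omega1_mem:
  assumes "A \<subseteq> omega1" "A \<noteq> {}"
  shows "(LEAST x. x \<in> A) \<in> omega1"
  unfolding Least_omega1[OF assms] by (simp add: mem_omega1_iff)

lemma Least_omega1_le_point_iff:
  assumes "A \<subseteq> omega1" "A \<noteq> {}"
  shows "(LEAST x. x \<in> A) \<le> - ((1/2) ^ i) \<longleftrightarrow> (\<exists>n\<le>i. - ((1/2) ^ n) \<in> A)"
proof (cases "\<exists>n. - ((1/2::real) ^ n) \<in> A")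
  case True
  let ?N = "LEAST n. - ((1/2::real) ^ n) \<in> A"
  have "?N \<le> i \<longleftrightarrow> (\<exists>n\<le>i. - ((1/2) ^ n) \<in> A)"
    using LeastI_ex[OF True] Least_le[of "\<lambda>n. - ((1/2::real) ^ n) \<in> A"] le_trans by blast
  then show ?thesis
    unfolding Least_omega1[OF assms] using True by simp
qed (simp add: Least_omega1[OF assms])

lemma cauchy_rep_SomeD:
  assumes "cauchy_rep s = Some y"
  shows "\<bar>nu (s i) - y\<bar> \<le> (1/2) ^ i"
proof -
  let ?f = "\<lambda>i. nu (s i)"
  have modulus: "\<bar>?f i - ?f j\<bar> \<le> (1/2) ^ i" if "i \<le> j" for i j
    using assms that unfolding cauchy_rep_def by (auto split: if_splits)
  have y: "y = lim ?f"
    using assms unfolding cauchy_rep_def by (auto split: if_splits)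
  have "Cauchy ?f"
  proof (rule metric_CauchyI)
    fix e :: real assume "0 < e"
    then obtain N where N: "(1/2::real) ^ N < e"
      using real_arch_pow_inv[of e "1/2"] by auto
    have "dist (?f m) (?f n) < e" if "N \<le> m" "N \<le> n" for m n
    proof -
      have "dist (?f m) (?f n) \<le> (1/2) ^ min m n"
        using modulus[of m n] modulus[of n m]
        by (cases "m \<le> n") (auto simp: dist_real_def abs_minus_commute)
      also have "\<dots> \<le> (1/2) ^ N"
        using that by simp
      finally show ?thesis
        using N by simp
    qed
    then show "\<exists>N. \<forall>m\<ge>N. \<forall>n\<ge>N. dist (?f m) (?f n) < e"
      by blast
  qed
  then have "?f \<longlonglongrightarrow> y"
    unfolding y by (simp add: Cauchy_convergent_iff convergent_LIMSEQ_iff)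
  then have "(\<lambda>j. \<bar>?f i - ?f j\<bar>) \<longlonglongrightarrow> \<bar>?f i - y\<bar>"
    by (intro tendsto_intros)
  then show ?thesis
    by (rule LIMSEQ_le_const2) (use modulus in auto)
qed

lemma cauchy_rep_eqI:
  assumes "\<And>i. \<bar>nu (s i) - y\<bar> \<le> (1/2) ^ Suc i"
  shows "cauchy_rep s = Some y"
proof -
  have "\<bar>nu (s i) - nu (s j)\<bar> \<le> (1/2) ^ i" if "i \<le> j" for i j
  proof -
    have "\<bar>nu (s j) - y\<bar> \<le> (1/2) ^ Suc i"
      by (rule order_trans[OF assms[of j]]) (use that in simp)
    then show ?thesis
      using assms[of i] unfolding abs_le_iff power_Suc by linarith
  qed
  moreover have "(\<lambda>i. nu (s i)) \<longlonglongrightarrow> y"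
  proof (rule LIMSEQ_I)
    fix e :: real assume "0 < e"
    then obtain N where N: "(1/2::real) ^ N < e"
      using real_arch_pow_inv[of e "1/2"] by auto
    have "norm (nu (s i) - y) < e" if "N \<le> i" for i
      using assms[of i] N half_power_le_iff[of "Suc i" N] that by simp
    then show "\<exists>N. \<forall>i\<ge>N. norm (nu (s i) - y) < e"
      by blast
  qed
  ultimately show ?thesis
    unfolding cauchy_rep_def by (simp add: limI)
qed

lemma ball_code_0: "ball_code 0 = {}"
  by (simp add: ball_code_def prod_decode_0)

definition singleton_ball :: "nat \<Rightarrow> nat" where
  "singleton_ball c = prod_encode (Suc c, prod_encode (1, 2 ^ (c + 2) - 1))"

lemma ball_code_singleton_ball: "ball_code (singleton_ball c) = {- ((1/2) ^ c)}"
proof -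
  have "real (Suc (2 ^ (c + 2) - 1)) = 2 ^ (c + 2)"
    by (simp add: of_nat_diff Suc_diff_1)
  then have ball: "ball_code (singleton_ball c) = {y \<in> omega1. \<bar>y + (1/2) ^ c\<bar> < (1/2) ^ (c + 2)}"
    unfolding ball_code_def singleton_ball_def by (simp add: power_one_over)
  have radius: "(1/2::real) ^ (c + 2) < (1/2) ^ Suc c"
    by simp
  have "y = - ((1/2) ^ c)" if "y \<in> omega1" "\<bar>y + (1/2) ^ c\<bar> < (1/2) ^ (c + 2)" for y
    by (rule omega1_isolated[OF that(1)]) (use that(2) radius in linarith)
  moreover have "- ((1/2::real) ^ c) \<in> omega1"
    by (auto simp: mem_omega1_iff)
  moreover have "\<bar>- ((1/2) ^ c) + (1/2) ^ c\<bar> < (1/2::real) ^ (c + 2)"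
    by simp
  ultimately show ?thesis
    unfolding ball by blast
qed

lemma recursive_singleton_ball [recursive_intros]:
  "recursive n a \<Longrightarrow> recursive n (\<lambda>xs. singleton_ball (a xs))"
  unfolding singleton_ball_def by (intro recursive_intros)

text \<open>Clearing denominators in \<open>\<bar>-2^-x - nu k\<bar> < s / (t + 1)\<close>: for \<open>k = 0\<close> this is
  \<open>t + 1 < s 2^x\<close>, otherwise \<open>\<bar>2^(k-1) - 2^x\<bar> (t + 1) < s 2^(x+k-1)\<close>.\<close>
definition ball_test :: "nat \<Rightarrow> nat \<Rightarrow> nat" where
  "ball_test b x =
    (let k = fst (prod_decode b); s = fst (prod_decode (snd (prod_decode b)));
         t = snd (prod_decode (snd (prod_decode b)))
     in if k = 0 then (if Suc t < s * 2 ^ x then 1 else 0)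
        else if ((2 ^ (k - 1) - 2 ^ x) + (2 ^ x - 2 ^ (k - 1))) * Suc t < s * 2 ^ (x + (k - 1))
        then 1 else 0)"

lemma divide_less_divide_iff:
  "(0::real) < D \<Longrightarrow> 0 < T \<Longrightarrow> A / D < S / T \<longleftrightarrow> A * T < S * D"
  by (simp add: divide_less_eq less_divide_eq field_simps)

lemma of_nat_absdiff: "real ((a - b) + (b - a)) = \<bar>real a - real b\<bar>"
  by (cases "a \<le> b") (auto simp: of_nat_diff)

lemma ball_test_iff: "ball_test b x = (if - ((1/2::real) ^ x) \<in> ball_code b then 1 else 0)"
proof -
  obtain k s t where b: "prod_decode b = (k, prod_encode (s, t))"
    by (metis prod_decode_inverse surj_pair)
  have "- ((1/2::real) ^ x) \<in> omega1"
    by (auto simp: mem_omega1_iff)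
  then have mem:
    "- ((1/2::real) ^ x) \<in> ball_code b \<longleftrightarrow> \<bar>- ((1/2) ^ x) - nu k\<bar> < real s / real (Suc t)"
    unfolding ball_code_def b by simp
  have nat_cmp: "real a < real s * 2 ^ n \<longleftrightarrow> a < s * 2 ^ n" for a n
  proof -
    have "real s * 2 ^ n = real (s * 2 ^ n)"
      by simp
    then show ?thesis
      by (simp only: of_nat_less_iff)
  qed
  show ?thesis
  proof (cases k)
    case 0
    have "\<bar>- ((1/2::real) ^ x) - nu k\<bar> < real s / real (Suc t) \<longleftrightarrow> real (Suc t) < real s * 2 ^ x"
      using 0 by (simp add: power_one_over field_simps del: of_nat_Suc)
    then have "\<bar>- ((1/2::real) ^ x) - nu k\<bar> < real s / real (Suc t) \<longleftrightarrow> Suc t < s * 2 ^ x"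
      by (simp only: nat_cmp)
    then show ?thesis
      using 0 mem by (simp add: ball_test_def b)
  next
    case (Suc e)
    let ?d = "(2 ^ e - 2 ^ x) + (2 ^ x - 2 ^ e) :: nat"
    have "\<bar>- ((1/2::real) ^ x) - nu k\<bar> = \<bar>2 ^ e - 2 ^ x\<bar> / 2 ^ (x + e)"
      using Suc by (simp add: power_one_over power_add field_simps abs_if)
    also have "\<dots> = real ?d / 2 ^ (x + e)"
      by (simp only: of_nat_absdiff of_nat_power of_nat_numeral)
    finally have "\<bar>- ((1/2::real) ^ x) - nu k\<bar> < real s / real (Suc t) \<longleftrightarrow>
        ?d * Suc t < s * 2 ^ (x + e)"
      by (simp only: divide_less_divide_iff of_nat_mult zero_less_power zero_less_numeral
          of_nat_0_less_iff zero_less_Suc nat_cmp flip: of_nat_mult)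
    then show ?thesis
      using Suc mem by (simp add: ball_test_def b)
  qed
qed

lemma recursive_ball_test [recursive_intros]:
  "recursive n a \<Longrightarrow> recursive n b \<Longrightarrow> recursive n (\<lambda>xs. ball_test (a xs) (b xs))"
  unfolding ball_test_def Let_def by (intro recursive_intros)

section \<open>Sort reduces to the minimum\<close>

definition zero_count :: "baire \<Rightarrow> nat \<Rightarrow> nat" where
  "zero_count p j = (\<Sum>t<j. if p t = 0 then 1 else 0)"

lemma zero_count_eq_card: "zero_count p j = card ({i. p i = 0} \<inter> {..<j})"
  unfolding zero_count_def by (simp add: sum.If_cases Int_commute)

lemma zero_count_0 [simp]: "zero_count p 0 = 0"
  unfolding zero_count_def by simp

lemma zero_count_Suc: "zero_count p (Suc j) = zero_count p j + (if p j = 0 then 1 else 0)"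
  unfolding zero_count_def by simp

lemma Sort_fun_eq_0_iff: "Sort_fun p i = 0 \<longleftrightarrow> (\<exists>j. i < zero_count p j)"
proof (cases "finite {i. p i = 0}")
  case True
  let ?Z = "{i. p i = 0}"
  have le: "zero_count p j \<le> card ?Z" for j
    unfolding zero_count_eq_card by (rule card_mono[OF True]) auto
  obtain j0 where "\<forall>z\<in>?Z. z < j0"
    using True finite_nat_set_iff_bounded by blast
  then have "zero_count p j0 = card ?Z"
    unfolding zero_count_eq_card by (metis Int_absorb2 lessThan_iff subsetI)
  then have "(\<exists>j. i < zero_count p j) \<longleftrightarrow> i < card ?Z"
    using le by (metis less_le_trans)
  then show ?thesis
    using True unfolding Sort_fun_def by auto
next
  case False
  obtain S where S: "S \<subseteq> {i. p i = 0}" "finite S" "card S = Suc i"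
    using infinite_arbitrarily_large[OF False] by blast
  then have "S \<subseteq> {i. p i = 0} \<inter> {..<Suc (Max S)}"
    by (auto simp: le_imp_less_Suc)
  then have "Suc i \<le> zero_count p (Suc (Max S))"
    unfolding zero_count_eq_card using S by (metis card_mono finite_Int finite_lessThan)
  then show ?thesis
    using False unfolding Sort_fun_def by (auto intro!: exI[of _ "Suc (Max S)"])
qed

lemma Sort_fun_le_1: "Sort_fun p i \<le> 1"
  by (simp add: Sort_fun_def)

lemma ex_zero_at_count_iff: "(\<exists>j. p j = 0 \<and> zero_count p j = c) \<longleftrightarrow> (\<exists>j. c < zero_count p j)"
proof
  assume "\<exists>j. p j = 0 \<and> zero_count p j = c"
  then obtain j where "p j = 0" "zero_count p j = c"
    by blast
  then have "c < zero_count p (Suc j)"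
    by (simp add: zero_count_Suc)
  then show "\<exists>j. c < zero_count p j" ..
next
  assume ex: "\<exists>j. c < zero_count p j"
  let ?j = "LEAST j. c < zero_count p j"
  have above: "c < zero_count p ?j"
    using ex by (rule LeastI_ex)
  then have "?j \<noteq> 0"
    by (metis not_less0 zero_count_0)
  then obtain j' where j': "?j = Suc j'"
    using not0_implies_Suc by blast
  then have "\<not> c < zero_count p j'"
    using not_less_Least[of j' "\<lambda>j. c < zero_count p j"] by simp
  with above show "\<exists>j. p j = 0 \<and> zero_count p j = c"
    unfolding j' zero_count_Suc by (intro exI[of _ j']) (auto split: if_splits)
qed

lemma zero_count_cong: "(\<forall>i<j. p i = p' i) \<Longrightarrow> zero_count p j = zero_count p' j"
  unfolding zero_count_def by (intro sum.cong) auto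

definition sort_to_min_name :: "baire \<Rightarrow> nat \<Rightarrow> nat" where
  "sort_to_min_name p j = (if p j = 0 then singleton_ball (zero_count p j) else 0)"

text \<open>\<open>s (i + 2)\<close> names a point within \<open>2^-(i+2)\<close> of the minimum, and the test says
  \<open>nu (s (i + 2)) \<le> -2^-i\<close>.\<close>
definition sort_from_min :: "baire \<Rightarrow> nat \<Rightarrow> nat" where
  "sort_from_min s i = (if 1 \<le> s (i + 2) \<and> s (i + 2) \<le> Suc i then 1 else 0)"

lemma point_in_sort_to_min_set_iff:
  "- ((1/2) ^ n) \<in> omega1 - (\<Union>j. ball_code (sort_to_min_name p j)) \<longleftrightarrow> \<not> (\<exists>j. n < zero_count p j)"
proof -
  have "- ((1/2::real) ^ n) \<in> (\<Union>j. ball_code (sort_to_min_name p j)) \<longleftrightarrow>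
      (\<exists>j. p j = 0 \<and> zero_count p j = n)"
    by (auto simp: sort_to_min_name_def ball_code_singleton_ball ball_code_0 split: if_splits)
  then show ?thesis
    by (auto simp: mem_omega1_iff ex_zero_at_count_iff)
qed

lemma sort_to_min_set_nonempty: "omega1 - (\<Union>j. ball_code (sort_to_min_name p j)) \<noteq> {}"
  by (auto simp: mem_omega1_iff sort_to_min_name_def ball_code_singleton_ball ball_code_0
      split: if_splits)

lemma Least_sort_to_min_set_le_point_iff:
  fixes p :: baire
  defines "A \<equiv> omega1 - (\<Union>j. ball_code (sort_to_min_name p j))"
  shows "(LEAST x. x \<in> A) \<le> - ((1/2) ^ i) \<longleftrightarrow> Sort_fun p i \<noteq> 0"
proof -
  have "(LEAST x. x \<in> A) \<le> - ((1/2) ^ i) \<longleftrightarrow> (\<exists>n\<le>i. \<not> (\<exists>j. n < zero_count p j))"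
    using sort_to_min_set_nonempty[of p] Least_omega1_le_point_iff[of A]
      point_in_sort_to_min_set_iff[of _ p]
    unfolding A_def by auto
  also have "\<dots> \<longleftrightarrow> Sort_fun p i \<noteq> 0"
    unfolding Sort_fun_eq_0_iff by (meson le_less_trans order_refl)
  finally show ?thesis .
qed

lemma sort_from_min_eq_Sort_fun:
  assumes "cauchy_rep s = Some (LEAST x. x \<in> omega1 - (\<Union>j. ball_code (sort_to_min_name p j)))"
  shows "sort_from_min s = Sort_fun p"
proof
  fix i
  let ?A = "omega1 - (\<Union>j. ball_code (sort_to_min_name p j))"
  have "\<bar>nu (s (i + 2)) - (LEAST x. x \<in> ?A)\<bar> < (1/2) ^ Suc i"
    using cauchy_rep_SomeD[OF assms, of "i + 2"] half_power_less_iff[of "i + 2" "Suc i"] by linarith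
  moreover have "(LEAST x. x \<in> ?A) \<in> omega1"
    using sort_to_min_set_nonempty by (intro Least_omega1_mem) auto
  ultimately have "nu (s (i + 2)) \<le> - ((1/2) ^ i) \<longleftrightarrow> (LEAST x. x \<in> ?A) \<le> - ((1/2) ^ i)"
    by (intro omega1_same_side nu_mem_omega1)
  then have "nu (s (i + 2)) \<le> - ((1/2) ^ i) \<longleftrightarrow> Sort_fun p i \<noteq> 0"
    using Least_sort_to_min_set_le_point_iff by simp
  then show "sort_from_min s i = Sort_fun p i"
    unfolding sort_from_min_def nu_le_point_iff using Sort_fun_le_1[of p i] by auto
qed

lemma recursive_sort_to_min_name: "recursive 2 (\<lambda>xs. sort_to_min_name (code_nth (xs ! 0)) (xs ! 1))"
  unfolding sort_to_min_name_def zero_count_def by (intro recursive_intros; simp)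

lemma recursive_sort_from_min: "recursive 2 (\<lambda>xs. sort_from_min (code_nth (xs ! 0)) (xs ! 1))"
  unfolding sort_from_min_def by (intro recursive_intros; simp)

lemma depends_on_prefix_sort_to_min_name: "depends_on_prefix 1 sort_to_min_name"
  unfolding depends_on_prefix_def
proof (intro allI impI)
  fix p p' :: baire and j
  assume "\<forall>i<j + 1. p i = p' i"
  moreover have "zero_count p j = zero_count p' j"
    by (rule zero_count_cong) (use calculation in auto)
  ultimately show "sort_to_min_name p j = sort_to_min_name p' j"
    by (simp add: sort_to_min_name_def)
qed

lemma depends_on_prefix_sort_from_min: "depends_on_prefix 3 sort_from_min"
  unfolding depends_on_prefix_def sort_from_min_def by auto

lemma Sort_le_min: "sW_le Sort_problem min_problem"
proof (rule sW_leI[OF recursive_sort_to_min_name depends_on_prefix_sort_to_min_name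
      recursive_sort_from_min depends_on_prefix_sort_from_min])
  fix p x
  assume "in_rep Sort_problem p = Some x" "x \<in> pdom Sort_problem"
  then have "x = p"
    by (simp add: Sort_problem_def cantor_rep_def split: if_splits)
  let ?A = "omega1 - (\<Union>j. ball_code (sort_to_min_name p j))"
  have "in_rep min_problem (sort_to_min_name p) = Some ?A" "?A \<in> pdom min_problem"
    using sort_to_min_set_nonempty
    by (simp_all add: min_problem_def closed_neg_rep_def)
  moreover have "\<exists>y. out_rep Sort_problem (sort_from_min q) = Some y \<and> y \<in> pmap Sort_problem x"
    if "out_rep min_problem q = Some y'" "y' \<in> pmap min_problem ?A" for q y'
    using that sort_from_min_eq_Sort_fun[of q p] \<open>x = p\<close>
    by (auto simp: min_problem_def Sort_problem_def cantor_rep_def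
        Sort_fun_le_1[unfolded One_nat_def])
  ultimately show "\<exists>x'. in_rep min_problem (sort_to_min_name p) = Some x' \<and> x' \<in> pdom min_problem \<and>
      (\<forall>q y'. out_rep min_problem q = Some y' \<longrightarrow> y' \<in> pmap min_problem x' \<longrightarrow>
        (\<exists>y. out_rep Sort_problem (sort_from_min q) = Some y \<and> y \<in> pmap Sort_problem x))"
    by blast
qed

section \<open>The minimum reduces to Sort\<close>

definition covered :: "baire \<Rightarrow> nat \<Rightarrow> bool" where
  "covered p x \<longleftrightarrow> (\<exists>t. - ((1/2::real) ^ x) \<in> ball_code (p t))"

definition covered_by :: "baire \<Rightarrow> nat \<Rightarrow> nat \<Rightarrow> nat" where
  "covered_by p j x = (if (\<Sum>t<Suc j. ball_test (p t) x) = 0 then 0 else 1)"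

definition scan :: "baire \<Rightarrow> nat \<Rightarrow> nat" where
  "scan p j = rec_nat 0 (\<lambda>k r. r + covered_by p k r) j"

definition min_to_sort_name :: "baire \<Rightarrow> nat \<Rightarrow> nat" where
  "min_to_sort_name p j = 1 - covered_by p j (scan p j)"

definition min_from_sort :: "baire \<Rightarrow> nat \<Rightarrow> nat" where
  "min_from_sort s i = Suc (zero_count s (Suc i))"

lemma covered_by_iff:
  "covered_by p j x = (if \<exists>t\<le>j. - ((1/2::real) ^ x) \<in> ball_code (p t) then 1 else 0)"
proof -
  have "(\<Sum>t<Suc j. ball_test (p t) x) = 0 \<longleftrightarrow> \<not> (\<exists>t\<le>j. - ((1/2::real) ^ x) \<in> ball_code (p t))"
    by (auto simp: lessThan_Suc_atMost ball_test_iff)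
  then show ?thesis
    by (simp add: covered_by_def)
qed

lemma scan_0 [simp]: "scan p 0 = 0"
  by (simp add: scan_def)

lemma scan_Suc: "scan p (Suc j) = scan p j + covered_by p j (scan p j)"
  by (simp add: scan_def)

lemma scan_mono: "j \<le> j' \<Longrightarrow> scan p j \<le> scan p j'"
  by (induct j' rule: dec_induct) (auto simp: scan_Suc)

lemma zero_count_min_to_sort_name: "zero_count (min_to_sort_name p) j = scan p j"
  by (induct j) (auto simp: scan_Suc zero_count_Suc min_to_sort_name_def covered_by_iff)

lemma covered_if_less_scan: "x < scan p j \<Longrightarrow> covered p x"
proof (induct j)
  case (Suc j)
  show ?case
  proof (cases "x < scan p j")
    case False
    moreover have "covered_by p j (scan p j) \<le> 1"
      by (simp add: covered_by_def)
    ultimately have "x = scan p j"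
      using Suc.prems by (simp add: scan_Suc)
    moreover have "covered_by p j (scan p j) \<noteq> 0"
      using False Suc.prems by (simp add: scan_Suc)
    ultimately show ?thesis
      unfolding covered_def covered_by_iff by (auto split: if_splits)
  qed (rule Suc.hyps)
qed simp

lemma ex_scan_ge_if_covered: "(\<forall>x<n. covered p x) \<Longrightarrow> \<exists>j. n \<le> scan p j"
proof (induct n)
  case (Suc n)
  then obtain j where j: "n \<le> scan p j"
    by auto
  obtain t where t: "- ((1/2::real) ^ n) \<in> ball_code (p t)"
    using Suc.prems unfolding covered_def by blast
  let ?j = "max j t"
  have "n \<le> scan p ?j"
    using j scan_mono[of j ?j p] by simp
  moreover have "\<exists>t'\<le>?j. - ((1/2::real) ^ n) \<in> ball_code (p t')"
    using t by (intro exI[of _ t]) simp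
  then have "scan p (Suc ?j) = Suc n" if "scan p ?j = n"
    using that by (simp add: scan_Suc covered_by_iff)
  ultimately show ?case
    by (metis Suc_leI le_neq_implies_less order_refl)
qed simp

lemma less_scan_iff: "(\<exists>j. i < scan p j) \<longleftrightarrow> (\<forall>x\<le>i. covered p x)"
proof
  assume "\<exists>j. i < scan p j"
  then show "\<forall>x\<le>i. covered p x"
    using covered_if_less_scan le_less_trans by blast
next
  assume "\<forall>x\<le>i. covered p x"
  then have "\<forall>x<Suc i. covered p x"
    by (simp add: less_Suc_eq_le)
  then obtain j where "Suc i \<le> scan p j"
    using ex_scan_ge_if_covered by blast
  then show "\<exists>j. i < scan p j"
    using Suc_le_eq by blast
qed

lemma zero_count_initial_zeros:
  assumes "\<And>t. s t = 0 \<longleftrightarrow> (\<forall>x\<le>t. C x)"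
  shows "zero_count s n = (if \<exists>m. \<not> C m then min n (LEAST m. \<not> C m) else n)"
proof (cases "\<exists>m. \<not> C m")
  case True
  let ?N = "LEAST m. \<not> C m"
  have "(\<forall>x\<le>t. C x) \<longleftrightarrow> t < ?N" for t
  proof
    show "t < ?N" if "\<forall>x\<le>t. C x"
      using that LeastI_ex[OF True] not_less by blast
    show "\<forall>x\<le>t. C x" if "t < ?N"
      using that not_less_Least le_less_trans by blast
  qed
  then have "zero_count s n = min n ?N"
    using assms by (induct n) (auto simp: zero_count_Suc)
  then show ?thesis
    using True by simp
next
  case False
  then have "zero_count s n = n"
    using assms by (induct n) (auto simp: zero_count_Suc)
  then show ?thesis
    using False by simp
qed

lemma cauchy_rep_min_from_sort:
  assumes "\<And>t. s t = 0 \<longleftrightarrow> (\<forall>x\<le>t. C x)"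
  shows "cauchy_rep (min_from_sort s) =
    Some (if \<exists>m. \<not> C m then - ((1/2) ^ (LEAST m. \<not> C m)) else 0)"
proof (rule cauchy_rep_eqI)
  fix i
  show "\<bar>nu (min_from_sort s i) - (if \<exists>m. \<not> C m then - ((1/2) ^ (LEAST m. \<not> C m)) else 0)\<bar>
      \<le> (1/2) ^ Suc i"
    using half_power_le_iff[of "LEAST m. \<not> C m" "Suc i"]
    by (auto simp: min_from_sort_def zero_count_initial_zeros[OF assms] min_def
        simp del: half_power_le_iff power_Suc)
qed

lemma covered_by_cong: "(\<forall>i\<le>j. p i = p' i) \<Longrightarrow> covered_by p j x = covered_by p' j x"
  unfolding covered_by_def by (intro if_cong sum.cong) auto

lemma scan_cong: "(\<forall>i<j. p i = p' i) \<Longrightarrow> scan p j = scan p' j"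
proof (induct j)
  case (Suc j)
  then show ?case
    using covered_by_cong[of j p p'] by (simp add: scan_Suc)
qed simp

lemma recursive_min_to_sort_name: "recursive 2 (\<lambda>xs. min_to_sort_name (code_nth (xs ! 0)) (xs ! 1))"
  unfolding min_to_sort_name_def scan_def covered_by_def by (intro recursive_intros; simp)

lemma recursive_min_from_sort: "recursive 2 (\<lambda>xs. min_from_sort (code_nth (xs ! 0)) (xs ! 1))"
  unfolding min_from_sort_def zero_count_def by (intro recursive_intros; simp)

lemma depends_on_prefix_min_to_sort_name: "depends_on_prefix 1 min_to_sort_name"
  unfolding depends_on_prefix_def
proof (intro allI impI)
  fix p p' :: baire and j
  assume agree: "\<forall>i<j + 1. p i = p' i"
  then have "scan p j = scan p' j"
    by (intro scan_cong) auto
  with agree show "min_to_sort_name p j = min_to_sort_name p' j"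
    unfolding min_to_sort_name_def by (metis covered_by_cong Suc_eq_plus1 le_imp_less_Suc)
qed

lemma depends_on_prefix_min_from_sort: "depends_on_prefix 1 min_from_sort"
  unfolding depends_on_prefix_def min_from_sort_def using zero_count_cong by simp

lemma min_from_sort_Sort_eq_Least:
  assumes "A = omega1 - (\<Union>t. ball_code (p t))" "A \<noteq> {}"
  shows "cauchy_rep (min_from_sort (Sort_fun (min_to_sort_name p))) = Some (LEAST x. x \<in> A)"
proof -
  have "- ((1/2) ^ x) \<in> A \<longleftrightarrow> \<not> covered p x" for x
    unfolding assms(1) covered_def by (auto simp: mem_omega1_iff)
  moreover have "A \<subseteq> omega1"
    using assms(1) by blast
  ultimately have least: "(LEAST x. x \<in> A) =
      (if \<exists>m. \<not> covered p m then - ((1/2) ^ (LEAST m. \<not> covered p m)) else 0)"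
    using Least_omega1[OF _ assms(2)] by simp
  have "Sort_fun (min_to_sort_name p) t = 0 \<longleftrightarrow> (\<forall>x\<le>t. covered p x)" for t
    by (simp add: Sort_fun_eq_0_iff zero_count_min_to_sort_name less_scan_iff)
  from cauchy_rep_min_from_sort[OF this] show ?thesis
    unfolding least .
qed

lemma Min_le_Sort: "sW_le min_problem Sort_problem"
proof (rule sW_leI[OF recursive_min_to_sort_name depends_on_prefix_min_to_sort_name
      recursive_min_from_sort depends_on_prefix_min_from_sort])
  fix p A
  assume "in_rep min_problem p = Some A" "A \<in> pdom min_problem"
  then have A: "A = omega1 - (\<Union>t. ball_code (p t))" "A \<noteq> {}"
    by (simp_all add: min_problem_def closed_neg_rep_def)
  let ?q = "min_to_sort_name p"
  have "in_rep Sort_problem ?q = Some ?q" "?q \<in> pdom Sort_problem"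
    by (simp_all add: Sort_problem_def cantor_rep_def min_to_sort_name_def)
  moreover have "\<exists>y. out_rep min_problem (min_from_sort s) = Some y \<and> y \<in> pmap min_problem A"
    if "out_rep Sort_problem s = Some y'" "y' \<in> pmap Sort_problem ?q" for s y'
  proof -
    have "s = Sort_fun ?q"
      using that by (simp add: Sort_problem_def cantor_rep_def split: if_splits)
    then show ?thesis
      using min_from_sort_Sort_eq_Least[OF A] by (simp add: min_problem_def)
  qed
  ultimately show "\<exists>x'. in_rep Sort_problem ?q = Some x' \<and> x' \<in> pdom Sort_problem \<and>
      (\<forall>s y'. out_rep Sort_problem s = Some y' \<longrightarrow> y' \<in> pmap Sort_problem x' \<longrightarrow>
        (\<exists>y. out_rep min_problem (min_from_sort s) = Some y \<and> y \<in> pmap min_problem A))"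
    by blast
qed

theorem proposition3p1:
  shows "sW_equiv Sort_problem min_problem"
  unfolding sW_equiv_def using Sort_le_min Min_le_Sort by blast

end
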